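(* Assume AM defends every real machine, i.e. $d_r=e_r$ for all $r\in\mathcal M$. Let $\pi^*$ be the AM strategy that emulates the machine being defended: $\pi^{*r}_r=1$ and $\pi^{*r}_m=0$ for $m\neq r$, for every $r\in\mathcal M$. Then: (i) the M strategy $\rho$ with $\rho_m=\tfrac12$ for all $m$ is a best response to $\pi^*$, and $\max_{\rho\in[0,1]^{\mathcal M}}u_M(\pi^*,\rho)=\tfrac14$, so $u_{AM}(\pi^*,\rho)=\tfrac34$ for every best response $\rho$ to $\pi^*$; (ii) for every AM strategy $\pi$ (not necessarily naive) and every best response $\rho$ of M to $\pi$, $u_{AM}(\pi,\rho)\le\tfrac34$. Consequently $\pi^*$, together with a best response of M, is an AM-optimal equilibrium among all AM strategies.
   Context: Let $\mathcal M$ be a finite nonempty set of machine (environment) types. Let $e\in[0,1]^{\mathcal M}$ with $\sum_{r\in\mathcal M}e_r=1$ ($e_r$ is the fraction of all real machines that are of type $r$), and $d\in[0,1]^{\mathcal M}$ with $0\le d_r\le e_r$ ($d_r$ is the fraction of all real machines that are of type $r$ and defended by the anti-malware AM); put $D=\sum_{r}d_r$. An AM strategy $\pi$ assigns to each real machine type $r\in\mathcal M$ a vector $\pi^r\in[0,1]^{\mathcal M}$ with $\sum_{m}\pi^r_m\le 1$ ($\pi^r_m$ is the probability that AM creates a sandbox of type $m$ on a defended real machine of type $r$; with probability $1-\sum_m\pi^r_m$ no sandbox is created). AM's strategy is naive if $\pi^r$ does not depend on $r$; then we write $\pi_m$ for $\pi^r_m$. A malware (M) strategy is a vector $\rho\in[0,1]^{\mathcal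 M}$ ($\rho_m$ is the probability M attacks when it perceives environment $m$). The utilities are $$u_M(\pi,\rho)=\sum_{r\in\mathcal M}\Big[(e_r-d_r)\rho_r+d_r\Big(1-\sum_{m\in\mathcal M}\pi^r_m\rho_m\Big)\rho_r\Big],$$ $$u_{AM}(\pi,\rho)=\sum_{r\in\mathcal M}d_r\Big[\sum_{m\in\mathcal M}\big(\pi^r_m\rho_m+\pi^r_m(1-\rho_m)(1-\rho_r)\big)+\Big(1-\sum_{m\in\mathcal M}\pi^r_m\Big)(1-\rho_r)\Big].$$ A best response of M to $\pi$ is any $\rho\in\arg\max_{\hat\rho\in[0,1]^{\mathcal M}}u_M(\pi,\hat\rho)$. A pair $(\pi,\rho)$ with $\rho$ a best response to $\pi$ is an equilibrium; it is AM-optimal within a class of AM strategies if $\pi$ lies in the class and $u_{AM}(\pi,\rho)\ge u_{AM}(\pi',\rho')$ for every equilibrium $(\pi',\rho')$ with $\pi'$ in the class. *)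

theory Defs
  imports "HOL-Analysis.Analysis"
begin

text \<open>An AM strategy is pi :: 'm => 'm => real, where pi r m is the probability of
  creating a sandbox of type m on a defended real machine of type r.\<close>

definition am_strategy :: "('m::finite \<Rightarrow> 'm \<Rightarrow> real) \<Rightarrow> bool" where
  "am_strategy \<pi> \<longleftrightarrow> (\<forall>r m. 0 \<le> \<pi> r m \<and> \<pi> r m \<le> 1) \<and> (\<forall>r. (\<Sum>m\<in>UNIV. \<pi> r m) \<le> 1)"

definition m_strategy :: "('m::finite \<Rightarrow> real) \<Rightarrow> bool" where
  "m_strategy \<rho> \<longleftrightarrow> (\<forall>m. 0 \<le> \<rho> m \<and> \<rho> m \<le> 1)"

definition naive :: "('m::finite \<Rightarrow> 'm \<Rightarrow> real) \<Rightarrow> bool" where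
  "naive \<pi> \<longleftrightarrow> (\<forall>r r'. \<pi> r = \<pi> r')"

definition u_M :: "('m::finite \<Rightarrow> real) \<Rightarrow> ('m \<Rightarrow> real) \<Rightarrow> ('m \<Rightarrow> 'm \<Rightarrow> real) \<Rightarrow> ('m \<Rightarrow> real) \<Rightarrow> real" where
  "u_M e d \<pi> \<rho> = (\<Sum>r\<in>UNIV. (e r - d r) * \<rho> r + d r * (1 - (\<Sum>m\<in>UNIV. \<pi> r m * \<rho> m)) * \<rho> r)"

definition u_AM :: "('m::finite \<Rightarrow> real) \<Rightarrow> ('m \<Rightarrow> 'm \<Rightarrow> real) \<Rightarrow> ('m \<Rightarrow> real) \<Rightarrow> real" where
  "u_AM d \<pi> \<rho> = (\<Sum>r\<in>UNIV. d r * ((\<Sum>m\<in>UNIV. \<pi> r m * \<rho> m + \<pi> r m * (1 - \<rho> m) * (1 - \<rho> r))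
                                   + (1 - (\<Sum>m\<in>UNIV. \<pi> r m)) * (1 - \<rho> r)))"

definition best_response :: "('m::finite \<Rightarrow> real) \<Rightarrow> ('m \<Rightarrow> real) \<Rightarrow> ('m \<Rightarrow> 'm \<Rightarrow> real) \<Rightarrow> ('m \<Rightarrow> real) \<Rightarrow> bool" where
  "best_response e d \<pi> \<rho> \<longleftrightarrow> m_strategy \<rho> \<and> (\<forall>\<rho>'. m_strategy \<rho>' \<longrightarrow> u_M e d \<pi> \<rho>' \<le> u_M e d \<pi> \<rho>)"

definition am_optimal :: "('m::finite \<Rightarrow> real) \<Rightarrow> ('m \<Rightarrow> real) \<Rightarrow> (('m \<Rightarrow> 'm \<Rightarrow> real) \<Rightarrow> bool) \<Rightarrow> ('m \<Rightarrow> 'm \<Rightarrow> real) \<Rightarrow> ('m \<Rightarrow> real) \<Rightarrow> bool" where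
  "am_optimal e d C \<pi> \<rho> \<longleftrightarrow> C \<pi> \<and> best_response e d \<pi> \<rho> \<and>
     (\<forall>\<pi>' \<rho>'. C \<pi>' \<and> best_response e d \<pi>' \<rho>' \<longrightarrow> u_AM d \<pi>' \<rho>' \<le> u_AM d \<pi> \<rho>)"

definition emulate :: "'m::finite \<Rightarrow> 'm \<Rightarrow> real" where
  "emulate r m = (if m = r then 1 else 0)"

end

theory Submission
  imports Defs
begin

text \<open>When every machine is defended the game is constant-sum: the malware and the anti-malware
  payoffs add up to 1, so AM maximises its payoff exactly by minimising that of M.
  Whatever AM does, M can secure 1/4 by attacking with probability 1/2 everywhere, because
  a defended machine of type r then contributes at least (1 - 1/2) * 1/2.  Against emulation
  M perceives the true type, so its payoff is the average of \<rho> r (1 - \<rho> r), which is at most 1/4.\<close>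

lemma sum_emulate_mult: "(\<Sum>m\<in>UNIV. emulate r m * f m) = (f r :: real)"
proof -
  have "(\<Sum>m\<in>UNIV. emulate r m * f m) = (\<Sum>m\<in>UNIV. if r = m then f m else 0)"
    by (rule sum.cong) (auto simp: emulate_def)
  also have "\<dots> = f r" by simp
  finally show ?thesis .
qed

lemma am_strategy_emulate: "am_strategy emulate"
  using sum_emulate_mult[of _ "\<lambda>_. 1"] by (auto simp: am_strategy_def emulate_def)

lemma m_strategy_half: "m_strategy (\<lambda>_. 1/2)"
  by (simp add: m_strategy_def)

lemma u_AM_full_defense:
  fixes e :: "'m::finite \<Rightarrow> real"
  assumes "(\<Sum>r\<in>UNIV. e r) = 1"
  shows "u_AM e \<pi> \<rho> = 1 - u_M e e \<pi> \<rho>"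
proof -
  have inner: "(\<Sum>m\<in>UNIV. \<pi> r m * \<rho> m + \<pi> r m * (1 - \<rho> m) * (1 - \<rho> r))
      + (1 - (\<Sum>m\<in>UNIV. \<pi> r m)) * (1 - \<rho> r)
      = 1 - (1 - (\<Sum>m\<in>UNIV. \<pi> r m * \<rho> m)) * \<rho> r" for r
  proof -
    have "(\<Sum>m\<in>UNIV. \<pi> r m * \<rho> m + \<pi> r m * (1 - \<rho> m) * (1 - \<rho> r))
        = (\<Sum>m\<in>UNIV. \<pi> r m * \<rho> m) + (1 - \<rho> r) * ((\<Sum>m\<in>UNIV. \<pi> r m) - (\<Sum>m\<in>UNIV. \<pi> r m * \<rho> m))"
      by (simp add: sum.distrib sum_distrib_left sum_subtractf algebra_simps)
    then show ?thesis by (simp add: algebra_simps)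
  qed
  have "u_AM e \<pi> \<rho> = (\<Sum>r\<in>UNIV. e r - e r * ((1 - (\<Sum>m\<in>UNIV. \<pi> r m * \<rho> m)) * \<rho> r))"
    unfolding u_AM_def inner by (simp add: algebra_simps)
  also have "\<dots> = 1 - u_M e e \<pi> \<rho>"
    unfolding u_M_def using assms by (simp add: sum_subtractf sum.distrib algebra_simps)
  finally show ?thesis .
qed

lemma u_M_emulate: "u_M e e emulate \<rho> = (\<Sum>r\<in>UNIV. e r * ((1 - \<rho> r) * \<rho> r))"
  unfolding u_M_def sum_emulate_mult by (simp add: algebra_simps)

lemma one_minus_mult_le_quarter: "(1 - x) * x \<le> (1/4 :: real)"
proof -
  have "0 \<le> (x - 1/2)^2" by simp
  then show ?thesis by (simp add: power2_eq_square algebra_simps)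
qed

lemma u_M_emulate_le_quarter:
  fixes e :: "'m::finite \<Rightarrow> real"
  assumes "\<forall>r. 0 \<le> e r" and "(\<Sum>r\<in>UNIV. e r) = 1"
  shows "u_M e e emulate \<rho> \<le> 1/4"
proof -
  have "u_M e e emulate \<rho> \<le> (\<Sum>r\<in>UNIV. e r * (1/4))"
    unfolding u_M_emulate
    using assms(1) by (intro sum_mono mult_left_mono one_minus_mult_le_quarter) auto
  also have "\<dots> = 1/4" using assms(2) by (simp add: sum_divide_distrib[symmetric])
  finally show ?thesis .
qed

lemma u_M_emulate_half:
  fixes e :: "'m::finite \<Rightarrow> real"
  assumes "(\<Sum>r\<in>UNIV. e r) = 1"
  shows "u_M e e emulate (\<lambda>_. 1/2) = 1/4"
  unfolding u_M_emulate using assms by (simp add: sum_divide_distrib[symmetric])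

lemma u_M_half_ge_quarter:
  fixes e :: "'m::finite \<Rightarrow> real"
  assumes "\<forall>r. 0 \<le> e r" and "(\<Sum>r\<in>UNIV. e r) = 1" and "am_strategy \<pi>"
  shows "1/4 \<le> u_M e e \<pi> (\<lambda>_. 1/2)"
proof -
  have "e r * (1/4) \<le> e r * ((1 - (\<Sum>m\<in>UNIV. \<pi> r m * (1/2))) * (1/2))" for r
  proof -
    have "(\<Sum>m\<in>UNIV. \<pi> r m * (1/2)) = (\<Sum>m\<in>UNIV. \<pi> r m) / 2"
      by (simp add: sum_divide_distrib[symmetric])
    moreover have "(\<Sum>m\<in>UNIV. \<pi> r m) \<le> 1"
      using assms(3) by (simp add: am_strategy_def)
    ultimately show ?thesis using assms(1) by (intro mult_left_mono) auto
  qed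
  then have "(\<Sum>r\<in>UNIV. e r * (1/4)) \<le> u_M e e \<pi> (\<lambda>_. 1/2)"
    unfolding u_M_def by (intro sum_mono) (simp add: algebra_simps)
  moreover have "(\<Sum>r\<in>UNIV. e r * (1/4)) = 1/4"
    using assms(2) by (simp add: sum_divide_distrib[symmetric])
  ultimately show ?thesis by simp
qed

lemma best_response_emulate_half:
  fixes e :: "'m::finite \<Rightarrow> real"
  assumes "\<forall>r. 0 \<le> e r" and "(\<Sum>r\<in>UNIV. e r) = 1"
  shows "best_response e e emulate (\<lambda>_. 1/2)"
  using u_M_emulate_le_quarter[OF assms] u_M_emulate_half[OF assms(2)] m_strategy_half
  unfolding best_response_def by (metis (no_types))

lemma best_response_emulate_value:
  fixes e :: "'m::finite \<Rightarrow> real"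
  assumes "\<forall>r. 0 \<le> e r" and "(\<Sum>r\<in>UNIV. e r) = 1" and "best_response e e emulate \<rho>"
  shows "u_M e e emulate \<rho> = 1/4"
  using assms(3) m_strategy_half u_M_emulate_le_quarter[OF assms(1,2)] u_M_emulate_half[OF assms(2)]
  unfolding best_response_def by (metis order_antisym)

lemma best_response_value_ge_quarter:
  fixes e :: "'m::finite \<Rightarrow> real"
  assumes "\<forall>r. 0 \<le> e r" and "(\<Sum>r\<in>UNIV. e r) = 1"
    and "am_strategy \<pi>" and "best_response e e \<pi> \<rho>"
  shows "1/4 \<le> u_M e e \<pi> \<rho>"
  using assms(4) m_strategy_half u_M_half_ge_quarter[OF assms(1-3)]
  unfolding best_response_def by force

theorem theorem2:
  fixes e d :: "'m::finite \<Rightarrow> real"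
  assumes e_nonneg: "\<forall>r. 0 \<le> e r \<and> e r \<le> 1"
    and e_sum: "(\<Sum>r\<in>UNIV. e r) = 1"
    and full_defense: "\<forall>r. d r = e r"
  shows "best_response e d emulate (\<lambda>_. 1/2)
       \<and> (GREATEST v. \<exists>\<rho>. m_strategy \<rho> \<and> v = u_M e d emulate \<rho>) = 1/4
       \<and> (\<forall>\<rho>. best_response e d emulate \<rho> \<longrightarrow> u_AM d emulate \<rho> = 3/4)
       \<and> (\<forall>\<pi> \<rho>. am_strategy \<pi> \<and> best_response e d \<pi> \<rho> \<longrightarrow> u_AM d \<pi> \<rho> \<le> 3/4)
       \<and> am_strategy (emulate :: 'm \<Rightarrow> 'm \<Rightarrow> real)
       \<and> (\<forall>\<rho>. best_response e d emulate \<rho> \<longrightarrow> am_optimal e d am_strategy emulate \<rho>)"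
proof -
  have d_eq: "d = e" using full_defense by auto
  have e_ge0: "\<forall>r. 0 \<le> e r" using e_nonneg by auto
  note u_AM = u_AM_full_defense[OF e_sum]
  have max_value: "(GREATEST v. \<exists>\<rho>. m_strategy \<rho> \<and> v = u_M e e emulate \<rho>) = 1/4"
    using m_strategy_half u_M_emulate_half[OF e_sum] u_M_emulate_le_quarter[OF e_ge0 e_sum]
    by (intro Greatest_equality) auto
  have emulate_value: "u_AM e emulate \<rho> = 3/4" if "best_response e e emulate \<rho>" for \<rho>
    using best_response_emulate_value[OF e_ge0 e_sum that] u_AM by simp
  have value_le: "u_AM e \<pi> \<rho> \<le> 3/4" if "am_strategy \<pi>" "best_response e e \<pi> \<rho>" for \<pi> \<rho>
    using best_response_value_ge_quarter[OF e_ge0 e_sum that] u_AM by simp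
  show ?thesis
    unfolding d_eq am_optimal_def
    using best_response_emulate_half[OF e_ge0 e_sum] max_value emulate_value value_le
      am_strategy_emulate
    by fastforce
qed

end
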